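(* Let $f$ be a nonsingular $m$-stage FSR. Suppose $c,d\in\Omega(f)$ (possibly $c=d$), $u\in\Omega_m(c)$ and $u'\in\Omega_m(d)$, where $u'=u\oplus(1,0,\dots,0)$. Then $\min\big(\Omega_m(c)\cup\Omega_m(d)\big)<\min\{u,u'\}$, or $u\in\{(0,0,\dots,0),(1,0,\dots,0)\}$.
   Context: An $m$-stage FSR with feedback logic $f_1:\{0,1\}^m\to\{0,1\}$ has state transformation $F(x_0,\dots,x_{m-1})=(x_1,\dots,x_{m-1},f_1(x_0,\dots,x_{m-1}))$ and generates the binary sequences $s:\mathbb Z\to\{0,1\}$ with $s(t+m)=f_1(s(t),\dots,s(t+m-1))$ for all $t$. It is nonsingular if $F$ is bijective (equivalently all generated sequences are periodic). A periodic sequence $s$ of (least) period $p$ determines the cycle $[s(0),\dots,s(p-1)]$ (all shifts of $s$ give the same cycle), of period $p$. The cycle structure $\Omega(f)$ is the set of cycles of sequences generated by $f$. For a cycle $c$ determined by $s$ with period $p$, $\Omega_k(c)=\{(s(i),s((i+1)\bmod p),\dots,s((i+k-1)\bmod p)): 0\le i<p\}\subseteq\{0,1\}^k$. A vector $(a_0,\dots,a_{m-1})\in\{0,1\}^m$ is identified with the integer $\sum_{j=0}^{m-1}2^ja_j$, which defines the order and $\min$ on $\{0,1\}^m$. *)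

theory Defs
  imports Main
begin

text \<open>Binary vectors in {0,1}^m are bool lists of length m (True = 1).
  An m-stage FSR is given by m and its feedback logic f1 (only its values on
  lists of length m matter).\<close>

definition fsr_state :: "(bool list \<Rightarrow> bool) \<Rightarrow> bool list \<Rightarrow> bool list" where
  "fsr_state f1 x = tl x @ [f1 x]"

definition nonsingular :: "nat \<Rightarrow> (bool list \<Rightarrow> bool) \<Rightarrow> bool" where
  "nonsingular m f1 \<longleftrightarrow> bij_betw (fsr_state f1) {x. length x = m} {x. length x = m}"

definition generates :: "nat \<Rightarrow> (bool list \<Rightarrow> bool) \<Rightarrow> (int \<Rightarrow> bool) \<Rightarrow> bool" where
  "generates m f1 s \<longleftrightarrow>
     (\<forall>t::int. s (t + int m) = f1 (map (\<lambda>j. s (t + int j)) [0..<m]))"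

definition has_period :: "(int \<Rightarrow> bool) \<Rightarrow> nat \<Rightarrow> bool" where
  "has_period s p \<longleftrightarrow> p > 0 \<and> (\<forall>t. s (t + int p) = s t)"

definition least_period :: "(int \<Rightarrow> bool) \<Rightarrow> nat" where
  "least_period s = (LEAST p. has_period s p)"

definition cycle_of :: "(int \<Rightarrow> bool) \<Rightarrow> (int \<Rightarrow> bool) set" where
  "cycle_of s = {(\<lambda>t. s (t + k)) | k. True}"

definition cycle_structure :: "nat \<Rightarrow> (bool list \<Rightarrow> bool) \<Rightarrow> (int \<Rightarrow> bool) set set" where
  "cycle_structure m f1 = {cycle_of s | s. generates m f1 s \<and> (\<exists>p. has_period s p)}"

definition seq_windows :: "nat \<Rightarrow> (int \<Rightarrow> bool) \<Rightarrow> bool list set" where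
  "seq_windows k s = (let p = least_period s in
     {map (\<lambda>j. s (int ((i + j) mod p))) [0..<k] | i. i < p})"

definition Omega_k :: "nat \<Rightarrow> (int \<Rightarrow> bool) set \<Rightarrow> bool list set" where
  "Omega_k k c = seq_windows k (SOME s. s \<in> c)"

definition vec_val :: "bool list \<Rightarrow> nat" where
  "vec_val x = (\<Sum>j<length x. 2 ^ j * (if x ! j then 1 else 0))"

end

theory Submission
  imports Defs
begin

text \<open>Write \<open>u = (a, r)\<close>. As \<open>F\<close> is injective and \<open>u \<noteq> u'\<close>, the feedback values \<open>f\<^sub>1 u\<close> and
  \<open>f\<^sub>1 u'\<close> differ, so one of \<open>F u\<close>, \<open>F u'\<close> is \<open>(r, 0)\<close>, a state of \<open>c\<close> or \<open>d\<close>. Its value is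
  \<open>(val u - a) / 2\<close>, which is smaller than both \<open>val u\<close> and \<open>val u'\<close> unless \<open>r = 0\<close>.\<close>

definition window :: "nat \<Rightarrow> (int \<Rightarrow> bool) \<Rightarrow> nat \<Rightarrow> bool list" where
  "window m s i = map (\<lambda>j. s (int i + int j)) [0..<m]"

lemma has_period_mult: "has_period s p \<Longrightarrow> s (t + int p * int n) = s t"
proof (induction n)
  case (Suc n)
  have "s (t + int p * int (Suc n)) = s ((t + int p * int n) + int p)"
    by (simp add: algebra_simps)
  also have "\<dots> = s (t + int p * int n)"
    using Suc.prems by (simp add: has_period_def)
  finally show ?case using Suc by simp
qed simp

lemma has_period_mod: "has_period s p \<Longrightarrow> s (int (x mod p)) = s (int x)"
  using has_period_mult[of s p "int (x mod p)" "x div p"]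
  by (metis mod_mult_div_eq of_nat_add of_nat_mult add.commute)

lemma has_period_shift:
  assumes "has_period s p"
  shows "has_period (\<lambda>t. s (t + k)) p"
  unfolding has_period_def
proof (intro conjI allI)
  show "0 < p" using assms by (simp add: has_period_def)
  fix t
  have "s ((t + k) + int p) = s (t + k)" using assms by (simp add: has_period_def)
  then show "s (t + int p + k) = s (t + k)" by (simp add: ac_simps)
qed

lemma generates_shift:
  assumes "generates m f1 s"
  shows "generates m f1 (\<lambda>t. s (t + k))"
  unfolding generates_def
proof
  fix t
  have "s ((t + k) + int m) = f1 (map (\<lambda>j. s ((t + k) + int j)) [0..<m])"
    using assms by (simp add: generates_def)
  then show "s (t + int m + k) = f1 (map (\<lambda>j. s (t + int j + k)) [0..<m])"
    by (simp add: ac_simps)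
qed

lemma has_least_period: "has_period s p \<Longrightarrow> has_period s (least_period s)"
  unfolding least_period_def by (rule LeastI)

lemma window_mod: "has_period s p \<Longrightarrow> window m s (i mod p) = window m s i"
  unfolding window_def
  using has_period_mod[of s p "i + j" for j] has_period_mod[of s p "i mod p + j" for j]
  by (simp add: mod_add_left_eq flip: of_nat_add)

lemma seq_windows_eq_windows:
  assumes "has_period s (least_period s)"
  shows "seq_windows m s = {window m s i | i. i < least_period s}"
  unfolding seq_windows_def Let_def window_def
  using has_period_mod[OF assms] by (simp flip: of_nat_add)

lemma fsr_state_window:
  assumes "generates m f1 s" "0 < m"
  shows "fsr_state f1 (window m s i) = window m s (Suc i)"
proof (rule nth_equalityI)
  show "length (fsr_state f1 (window m s i)) = length (window m s (Suc i))"
    using assms(2) by (simp add: fsr_state_def window_def)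
next
  fix j assume "j < length (fsr_state f1 (window m s i))"
  then have j: "j < m" using assms(2) by (simp add: fsr_state_def window_def)
  show "fsr_state f1 (window m s i) ! j = window m s (Suc i) ! j"
  proof (cases "j < m - 1")
    case True
    then have "[0..<m] ! Suc j = Suc j" by simp
    then show ?thesis
      using True j by (simp add: fsr_state_def window_def nth_append nth_tl algebra_simps)
  next
    case False
    then have jm: "j = m - 1" using j by simp
    have "f1 (window m s i) = s (int i + int m)"
      using assms(1) unfolding generates_def window_def by metis
    then show ?thesis
      using jm assms(2) by (simp add: fsr_state_def window_def nth_append algebra_simps)
  qed
qed

text \<open>\<open>Omega_k\<close> reads the windows off an arbitrary representative of the cycle; every
  representative is a shift of a generated periodic sequence.\<close>

lemma Omega_k_eq_windows:
  assumes "c \<in> cycle_structure m f1"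
  obtains s where "generates m f1 s" "has_period s (least_period s)"
    and "Omega_k k c = {window k s i | i. i < least_period s}"
proof -
  obtain s0 q where c: "c = cycle_of s0" and gen: "generates m f1 s0" and per: "has_period s0 q"
    using assms unfolding cycle_structure_def by blast
  have "s0 = (\<lambda>t. s0 (t + 0))" by simp
  then have "s0 \<in> c" unfolding c cycle_of_def by blast
  then have "(SOME s. s \<in> c) \<in> c" by (rule someI[of "\<lambda>s. s \<in> c"])
  then obtain k' where rep: "(SOME s. s \<in> c) = (\<lambda>t. s0 (t + k'))"
    unfolding c cycle_of_def by blast
  let ?s = "\<lambda>t. s0 (t + k')"
  have "has_period ?s (least_period ?s)"
    using has_least_period[OF has_period_shift[OF per]] .
  moreover from this have "Omega_k k c = {window k ?s i | i. i < least_period ?s}"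
    unfolding Omega_k_def rep by (rule seq_windows_eq_windows)
  ultimately show thesis using that generates_shift[OF gen] by blast
qed

lemma finite_Omega_k: "c \<in> cycle_structure m f1 \<Longrightarrow> finite (Omega_k k c)"
  by (erule Omega_k_eq_windows[where k = k]) simp

lemma length_Omega_k: "c \<in> cycle_structure m f1 \<Longrightarrow> w \<in> Omega_k k c \<Longrightarrow> length w = k"
  by (erule Omega_k_eq_windows[where k = k]) (auto simp: window_def)

lemma fsr_state_Omega_k:
  assumes "c \<in> cycle_structure m f1" "0 < m" "w \<in> Omega_k m c"
  shows "fsr_state f1 w \<in> Omega_k m c"
proof -
  obtain s where gen: "generates m f1 s" and per: "has_period s (least_period s)"
    and om: "Omega_k m c = {window m s i | i. i < least_period s}"
    using Omega_k_eq_windows[OF assms(1), where k = m] by blast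
  obtain i where "w = window m s i" using assms(3) om by blast
  then have "fsr_state f1 w = window m s (Suc i mod least_period s)"
    using fsr_state_window[OF gen assms(2)] window_mod[OF per] by simp
  moreover have "Suc i mod least_period s < least_period s"
    using per by (simp add: has_period_def)
  ultimately show ?thesis using om by blast
qed

lemma vec_val_Cons: "vec_val (a # r) = (if a then 1 else 0) + 2 * vec_val r"
proof -
  have "vec_val (a # r) = (\<Sum>j<Suc (length r). 2 ^ j * (if (a # r) ! j then 1 else 0))"
    by (simp add: vec_val_def)
  also have "\<dots> = (if a then 1 else 0) + (\<Sum>j<length r. 2 ^ Suc j * (if r ! j then 1 else 0))"
    by (subst sum.lessThan_Suc_shift) simp
  also have "\<dots> = (if a then 1 else 0) + 2 * vec_val r"
    by (simp add: vec_val_def sum_distrib_left mult.assoc)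
  finally show ?thesis .
qed

lemma vec_val_append_False: "vec_val (r @ [False]) = vec_val r"
proof -
  have "vec_val (r @ [False]) = (\<Sum>j<length r. 2 ^ j * (if (r @ [False]) ! j then 1 else 0))"
    by (simp add: vec_val_def nth_append)
  also have "\<dots> = vec_val r"
    unfolding vec_val_def by (rule sum.cong) (auto simp: nth_append)
  finally show ?thesis .
qed

lemma vec_val_eq_0_iff: "vec_val r = 0 \<longleftrightarrow> r = replicate (length r) False"
proof (induction r)
  case Nil
  then show ?case by (simp add: vec_val_def)
qed (simp add: vec_val_Cons)

lemma fsr_state_flip_first:
  assumes "nonsingular m f1" "length r = m - 1" "0 < m"
  shows "fsr_state f1 (a # r) = r @ [False] \<or> fsr_state f1 ((\<not> a) # r) = r @ [False]"
proof -
  have "fsr_state f1 (a # r) \<noteq> fsr_state f1 ((\<not> a) # r)"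
    using bij_betw_imp_inj_on[OF assms(1)[unfolded nonsingular_def]] assms(2,3)
    by (auto dest: inj_onD)
  then show ?thesis by (auto simp: fsr_state_def)
qed

theorem lemma3:
  fixes m :: nat and f1 :: "bool list \<Rightarrow> bool"
    and c d :: "(int \<Rightarrow> bool) set" and u u' :: "bool list"
  assumes "0 < m"
    and "nonsingular m f1"
    and "c \<in> cycle_structure m f1" and "d \<in> cycle_structure m f1"
    and "u \<in> Omega_k m c" and "u' \<in> Omega_k m d"
    and "u' = map2 (\<noteq>) u (True # replicate (m - 1) False)"
  shows "Min (vec_val ` (Omega_k m c \<union> Omega_k m d)) < min (vec_val u) (vec_val u')
         \<or> u \<in> {replicate m False, True # replicate (m - 1) False}"
proof (cases u)
  case Nil
  then show ?thesis using length_Omega_k[OF assms(3,5)] assms(1) by simp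
next
  case (Cons a r)
  have r: "length r = m - 1" using length_Omega_k[OF assms(3,5)] Cons by simp
  have u': "u' = (\<not> a) # r" using assms(7) Cons r by (simp add: map2_map_map[symmetric] zip_replicate2 comp_def)
  have "r @ [False] \<in> Omega_k m c \<union> Omega_k m d"
    using fsr_state_flip_first[OF assms(2) r assms(1), of a]
      fsr_state_Omega_k[OF assms(3,1,5)] fsr_state_Omega_k[OF assms(4,1,6)] Cons u' by auto
  then have "Min (vec_val ` (Omega_k m c \<union> Omega_k m d)) \<le> vec_val r"
    using finite_Omega_k[OF assms(3)] finite_Omega_k[OF assms(4)]
    by (metis Min_le finite_UnI finite_imageI image_eqI vec_val_append_False)
  moreover have "vec_val r \<noteq> 0 \<Longrightarrow> vec_val r < min (vec_val u) (vec_val u')"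
    using Cons u' by (simp add: vec_val_Cons)
  moreover have "vec_val r = 0 \<Longrightarrow> u \<in> {replicate m False, True # replicate (m - 1) False}"
    using Cons r assms(1) vec_val_eq_0_iff[of r] by (cases a; cases m) auto
  ultimately show ?thesis by linarith
qed

end
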